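(* Let $\Gamma$ be a finite ordinal potential game with profile set $S$. A state $s^*\in S$ is strongly maximal if and only if there is no advancement path in the ordinal deployment graph of $\Gamma$ whose first vertex is $s^*$.
   Context: A finite strategic-form game $\Gamma=(I,(S_i)_{i\in I},(u_i)_{i\in I})$ has finite player set $I$, finite nonempty strategy sets $S_i$, utilities $u_i:S\to\mathbb{R}$, $S=\prod_i S_i$; $(s_i',s_{-i})$ denotes $s$ with player $i$'s strategy replaced by $s_i'$. A function $P:S\to\mathbb{R}$ is an ordinal potential if for all $i$, $a,b\in S_i$, $\sigma_{-i}\in S_{-i}$: $u_i(a,\sigma_{-i})>u_i(b,\sigma_{-i})\iff P(a,\sigma_{-i})>P(b,\sigma_{-i})$; $\Gamma$ is an ordinal potential game if one exists. The ordinal deployment graph has vertex set $S$ and an arc $(s,s')$, $s'\neq s$, iff $s'=(s_i',s_{-i})$ for some $i$ with $u_i(s')\ge u_i(s)$; the arc is positive if $u_i(s')>u_i(s)$ and neutral otherwise. An advancement path is a directed path in the ordinal deployment graph containing at least one positive arc. Define $s\succeq s'$ iff there is a directed path (possibly of length $0$) from $s'$ to $s$, and $s\succ s'$ iff $s\succeq s'$ and not $s'\succeq s$. A state $s^*$ is strongly maximal if there is no $s$ with $s\succ s^*$. *)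

theory Defs
  imports Complex_Main "HOL-Library.FuncSet"
begin

text \<open>Profiles are extensional
  functions in PiE I St; (s_i', s_{-i}) is written s(i := a).\<close>

definition finite_game :: "'i set \<Rightarrow> ('i \<Rightarrow> 's set) \<Rightarrow> bool" where
  "finite_game I St \<longleftrightarrow> finite I \<and> (\<forall>i\<in>I. finite (St i) \<and> St i \<noteq> {})"

definition profiles :: "'i set \<Rightarrow> ('i \<Rightarrow> 's set) \<Rightarrow> ('i \<Rightarrow> 's) set" where
  "profiles I St = PiE I St"

definition ordinal_potential ::
  "'i set \<Rightarrow> ('i \<Rightarrow> 's set) \<Rightarrow> ('i \<Rightarrow> ('i \<Rightarrow> 's) \<Rightarrow> real) \<Rightarrow> (('i \<Rightarrow> 's) \<Rightarrow> real) \<Rightarrow> bool" where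
  "ordinal_potential I St u P \<longleftrightarrow>
     (\<forall>i\<in>I. \<forall>a\<in>St i. \<forall>b\<in>St i. \<forall>\<sigma>\<in>profiles I St.
        u i (\<sigma>(i := a)) > u i (\<sigma>(i := b)) \<longleftrightarrow> P (\<sigma>(i := a)) > P (\<sigma>(i := b)))"

definition ordinal_potential_game ::
  "'i set \<Rightarrow> ('i \<Rightarrow> 's set) \<Rightarrow> ('i \<Rightarrow> ('i \<Rightarrow> 's) \<Rightarrow> real) \<Rightarrow> bool" where
  "ordinal_potential_game I St u \<longleftrightarrow> (\<exists>P. ordinal_potential I St u P)"

definition dep_arc ::
  "'i set \<Rightarrow> ('i \<Rightarrow> 's set) \<Rightarrow> ('i \<Rightarrow> ('i \<Rightarrow> 's) \<Rightarrow> real) \<Rightarrow> ('i \<Rightarrow> 's) \<Rightarrow> ('i \<Rightarrow> 's) \<Rightarrow> bool" where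
  "dep_arc I St u s s' \<longleftrightarrow> s \<in> profiles I St \<and> s' \<in> profiles I St \<and> s' \<noteq> s \<and>
     (\<exists>i\<in>I. s' = s(i := s' i) \<and> u i s' \<ge> u i s)"

definition positive_arc ::
  "'i set \<Rightarrow> ('i \<Rightarrow> 's set) \<Rightarrow> ('i \<Rightarrow> ('i \<Rightarrow> 's) \<Rightarrow> real) \<Rightarrow> ('i \<Rightarrow> 's) \<Rightarrow> ('i \<Rightarrow> 's) \<Rightarrow> bool" where
  "positive_arc I St u s s' \<longleftrightarrow> dep_arc I St u s s' \<and>
     (\<exists>i\<in>I. s' = s(i := s' i) \<and> u i s' > u i s)"

definition dep_path ::
  "'i set \<Rightarrow> ('i \<Rightarrow> 's set) \<Rightarrow> ('i \<Rightarrow> ('i \<Rightarrow> 's) \<Rightarrow> real) \<Rightarrow> ('i \<Rightarrow> 's) list \<Rightarrow> bool" where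
  "dep_path I St u xs \<longleftrightarrow> xs \<noteq> [] \<and> distinct xs \<and> set xs \<subseteq> profiles I St \<and>
     (\<forall>k. Suc k < length xs \<longrightarrow> dep_arc I St u (xs ! k) (xs ! Suc k))"

definition advancement_path ::
  "'i set \<Rightarrow> ('i \<Rightarrow> 's set) \<Rightarrow> ('i \<Rightarrow> ('i \<Rightarrow> 's) \<Rightarrow> real) \<Rightarrow> ('i \<Rightarrow> 's) list \<Rightarrow> bool" where
  "advancement_path I St u xs \<longleftrightarrow> dep_path I St u xs \<and>
     (\<exists>k. Suc k < length xs \<and> positive_arc I St u (xs ! k) (xs ! Suc k))"

text \<open>succeq I St u s s' means s \<succeq> s': a directed path (possibly of length 0) from s' to s.\<close>
definition succeq ::
  "'i set \<Rightarrow> ('i \<Rightarrow> 's set) \<Rightarrow> ('i \<Rightarrow> ('i \<Rightarrow> 's) \<Rightarrow> real) \<Rightarrow> ('i \<Rightarrow> 's) \<Rightarrow> ('i \<Rightarrow> 's) \<Rightarrow> bool" where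
  "succeq I St u s s' \<longleftrightarrow> (\<exists>xs. dep_path I St u xs \<and> hd xs = s' \<and> last xs = s)"

definition succ ::
  "'i set \<Rightarrow> ('i \<Rightarrow> 's set) \<Rightarrow> ('i \<Rightarrow> ('i \<Rightarrow> 's) \<Rightarrow> real) \<Rightarrow> ('i \<Rightarrow> 's) \<Rightarrow> ('i \<Rightarrow> 's) \<Rightarrow> bool" where
  "succ I St u s s' \<longleftrightarrow> succeq I St u s s' \<and> \<not> succeq I St u s' s"

definition strongly_maximal ::
  "'i set \<Rightarrow> ('i \<Rightarrow> 's set) \<Rightarrow> ('i \<Rightarrow> ('i \<Rightarrow> 's) \<Rightarrow> real) \<Rightarrow> ('i \<Rightarrow> 's) \<Rightarrow> bool" where
  "strongly_maximal I St u s\<^sub>0 \<longleftrightarrow> \<not> (\<exists>s \<in> profiles I St. succ I St u s s\<^sub>0)"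

end

theory Submission
  imports Defs
begin

text \<open>An ordinal potential never decreases along an arc of the deployment graph and strictly
  increases along a positive one, so it strictly increases along every advancement path.
  Hence if an advancement path leads from s0 to s, no path leads back and s \<succ> s0.
  Conversely, if s \<succeq> s0 via a path without positive arcs, every arc on it is neutral and
  can be traversed backwards, so s0 \<succeq> s as well.\<close>

lemma ordinal_potential_unilateral_less_iff:
  assumes "ordinal_potential I St u P" "i \<in> I"
    and "s \<in> profiles I St" "s' \<in> profiles I St" "s' = s(i := s' i)"
  shows "u i s < u i s' \<longleftrightarrow> P s < P s'"
proof -
  have "s i \<in> St i" "s' i \<in> St i"
    using assms(2-4) by (auto simp: profiles_def PiE_def)
  with assms show ?thesis
    unfolding ordinal_potential_def by (metis fun_upd_triv)
qed

lemma unilateral_deviation_converse: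
  assumes "s' = s(i := s' i)"
  shows "s = s'(i := s i)"
  using assms by (metis fun_upd_same fun_upd_triv fun_upd_upd)

lemma dep_arc_potential_le:
  assumes "ordinal_potential I St u P" "dep_arc I St u s s'"
  shows "P s \<le> P s'"
proof -
  from assms(2) obtain i where i: "i \<in> I" "s' = s(i := s' i)" "u i s \<le> u i s'"
    and prof: "s \<in> profiles I St" "s' \<in> profiles I St"
    unfolding dep_arc_def by blast
  have "s = s'(i := s i)" using i(2) by (rule unilateral_deviation_converse)
  then have "P s' < P s \<longleftrightarrow> u i s' < u i s"
    using ordinal_potential_unilateral_less_iff[OF assms(1) i(1) prof(2,1)] by simp
  with i(3) show ?thesis by linarith
qed

lemma positive_arc_potential_less:
  assumes "ordinal_potential I St u P" "positive_arc I St u s s'"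
  shows "P s < P s'"
proof -
  from assms(2) obtain i where "i \<in> I" "s' = s(i := s' i)" "u i s < u i s'"
    and "s \<in> profiles I St" "s' \<in> profiles I St"
    unfolding positive_arc_def dep_arc_def by blast
  with ordinal_potential_unilateral_less_iff[OF assms(1)] show ?thesis by blast
qed

lemma dep_path_potential_mono:
  assumes "ordinal_potential I St u P" "dep_path I St u xs" "i \<le> j" "j < length xs"
  shows "P (xs ! i) \<le> P (xs ! j)"
  using assms(3,4)
proof (induction j)
  case 0
  then show ?case by simp
next
  case (Suc j)
  show ?case
  proof (cases "i = Suc j")
    case False
    with Suc have "P (xs ! i) \<le> P (xs ! j)" by simp
    also have "\<dots> \<le> P (xs ! Suc j)"
      using assms(2) Suc.prems unfolding dep_path_def
      by (blast intro: dep_arc_potential_le[OF assms(1)])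
    finally show ?thesis .
  qed simp
qed

lemma dep_path_potential_hd_le_last:
  assumes "ordinal_potential I St u P" "dep_path I St u xs"
  shows "P (hd xs) \<le> P (last xs)"
proof -
  have "xs \<noteq> []" using assms(2) by (simp add: dep_path_def)
  then show ?thesis
    using dep_path_potential_mono[OF assms, of 0 "length xs - 1"]
    by (simp add: hd_conv_nth last_conv_nth)
qed

lemma advancement_path_potential_hd_less_last:
  assumes "ordinal_potential I St u P" "advancement_path I St u xs"
  shows "P (hd xs) < P (last xs)"
proof -
  have path: "dep_path I St u xs" and "xs \<noteq> []"
    using assms(2) by (simp_all add: advancement_path_def dep_path_def)
  then have hd_last: "hd xs = xs ! 0" "last xs = xs ! (length xs - 1)"
    by (simp_all add: hd_conv_nth last_conv_nth)
  obtain k where k: "Suc k < length xs" "positive_arc I St u (xs ! k) (xs ! Suc k)"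
    using assms(2) by (auto simp: advancement_path_def)
  have "P (xs ! 0) \<le> P (xs ! k)"
    using dep_path_potential_mono[OF assms(1) path, of 0 k] k(1) by simp
  also have "\<dots> < P (xs ! Suc k)"
    using positive_arc_potential_less[OF assms(1) k(2)] .
  also have "\<dots> \<le> P (xs ! (length xs - 1))"
    using dep_path_potential_mono[OF assms(1) path, of "Suc k" "length xs - 1"] k(1) by simp
  finally show ?thesis unfolding hd_last .
qed

lemma neutral_dep_arc_converse:
  assumes "dep_arc I St u s s'" "\<not> positive_arc I St u s s'"
  shows "dep_arc I St u s' s"
proof -
  from assms(1) obtain i where i: "i \<in> I" "s' = s(i := s' i)" "u i s \<le> u i s'"
    and prof: "s \<in> profiles I St" "s' \<in> profiles I St" "s' \<noteq> s"
    unfolding dep_arc_def by blast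
  have "u i s' \<le> u i s" using assms i unfolding positive_arc_def by force
  moreover have "s = s'(i := s i)" using i(2) by (rule unilateral_deviation_converse)
  ultimately show ?thesis using i(1) prof unfolding dep_arc_def by auto
qed

lemma neutral_dep_path_rev:
  assumes "dep_path I St u xs"
    and "\<forall>k. Suc k < length xs \<longrightarrow> \<not> positive_arc I St u (xs ! k) (xs ! Suc k)"
  shows "dep_path I St u (rev xs)"
  unfolding dep_path_def
proof (intro conjI allI impI)
  show "rev xs \<noteq> []" "distinct (rev xs)" "set (rev xs) \<subseteq> profiles I St"
    using assms(1) by (auto simp: dep_path_def)
  fix k
  assume k: "Suc k < length (rev xs)"
  define m where "m = length xs - Suc (Suc k)"
  have "Suc m < length xs" "rev xs ! k = xs ! Suc m" "rev xs ! Suc k = xs ! m"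
    using k by (simp_all add: rev_nth m_def Suc_diff_Suc)
  then show "dep_arc I St u (rev xs ! k) (rev xs ! Suc k)"
    using assms neutral_dep_arc_converse unfolding dep_path_def by metis
qed

lemma advancement_path_succ:
  assumes "ordinal_potential I St u P" "advancement_path I St u xs"
  shows "succ I St u (last xs) (hd xs)"
proof -
  have path: "dep_path I St u xs" using assms(2) by (simp add: advancement_path_def)
  have "P (hd xs) < P (last xs)"
    using advancement_path_potential_hd_less_last[OF assms] .
  then have "\<not> succeq I St u (hd xs) (last xs)"
    using dep_path_potential_hd_le_last[OF assms(1)] by (force simp: succeq_def)
  moreover have "succeq I St u (last xs) (hd xs)"
    using path by (auto simp: succeq_def)
  ultimately show ?thesis by (simp add: succ_def)
qed

lemma succeq_sym_if_no_advancement_path: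
  assumes "\<not> (\<exists>xs. advancement_path I St u xs \<and> hd xs = s\<^sub>0)" "succeq I St u s s\<^sub>0"
  shows "succeq I St u s\<^sub>0 s"
proof -
  from assms(2) obtain xs where path: "dep_path I St u xs" "hd xs = s\<^sub>0" "last xs = s"
    by (auto simp: succeq_def)
  with assms(1) have "dep_path I St u (rev xs)"
    unfolding advancement_path_def by (blast intro: neutral_dep_path_rev)
  moreover have "xs \<noteq> []" using path(1) by (simp add: dep_path_def)
  ultimately show ?thesis
    using path unfolding succeq_def by (metis hd_rev last_rev)
qed

theorem lemma1:
  fixes I :: "'i set" and St :: "'i \<Rightarrow> 's set" and u :: "'i \<Rightarrow> ('i \<Rightarrow> 's) \<Rightarrow> real"
    and s\<^sub>0 :: "'i \<Rightarrow> 's"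
  assumes "finite_game I St"
    and "ordinal_potential_game I St u"
    and "s\<^sub>0 \<in> profiles I St"
  shows "strongly_maximal I St u s\<^sub>0 \<longleftrightarrow>
         \<not> (\<exists>xs. advancement_path I St u xs \<and> hd xs = s\<^sub>0)"
proof
  obtain P where P: "ordinal_potential I St u P"
    using assms(2) by (auto simp: ordinal_potential_game_def)
  assume "strongly_maximal I St u s\<^sub>0"
  moreover have "last xs \<in> profiles I St" if "advancement_path I St u xs" for xs
    using that by (auto simp: advancement_path_def dep_path_def)
  ultimately show "\<not> (\<exists>xs. advancement_path I St u xs \<and> hd xs = s\<^sub>0)"
    using advancement_path_succ[OF P] unfolding strongly_maximal_def by blast
next
  assume "\<not> (\<exists>xs. advancement_path I St u xs \<and> hd xs = s\<^sub>0)"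
  then show "strongly_maximal I St u s\<^sub>0"
    using succeq_sym_if_no_advancement_path by (fastforce simp: strongly_maximal_def succ_def)
qed

end
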